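(* Let $\alpha>1$ and let $X=\{x_j:j\in J\}\subset\mathbb{R}^2$ be finite. If $s_2^*$ is equidistant from all points of $X$, then $s_\alpha^*=s_2^*$.
   Context: For $\beta>1$, $s_\beta^*$ denotes the unique minimiser of $P_\beta(s,X)=\sum_{j\in J}\|s-x_j\|^\beta+\max_{j\in J}\|s-x_j\|^\beta$ over $s\in\mathbb{R}^2$. *)

theory Defs
  imports "HOL-Analysis.Analysis"
begin

definition P :: "real \<Rightarrow> real^2 \<Rightarrow> (real^2) set \<Rightarrow> real" where
  "P \<beta> s X = (\<Sum>x\<in>X. norm (s - x) powr \<beta>) + Max ((\<lambda>x. norm (s - x) powr \<beta>) ` X)"

definition s_star :: "real \<Rightarrow> (real^2) set \<Rightarrow> real^2" where
  "s_star \<beta> X = (THE s. \<forall>t. P \<beta> s X \<le> P \<beta> t X)"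

end

theory Submission
  imports Defs
begin

text \<open>
  Let \<open>s\<close> be the minimiser of \<open>P 2\<close> (it exists by coercivity and is unique because \<open>P 2\<close>
  is strictly midpoint convex, which is what makes \<open>s_star 2 X\<close> meaningful) and let all
  points of \<open>X\<close> lie at distance \<open>r\<close> from \<open>s\<close>. Expanding \<open>P 2 (s + \<epsilon> v)\<close> to first order
  in \<open>\<epsilon> \<ge> 0\<close> shows \<open>\<Sum>\<^sub>x g x + max\<^sub>x g x \<ge> 0\<close> for \<open>g x = (s - x) \<bullet> v\<close> and every direction \<open>v\<close>.
  For \<open>\<alpha> > 1\<close> and \<open>v = t - s\<close>, the strict tangent inequality of \<open>norm _ powr \<alpha>\<close> at the points
  \<open>s - x\<close>, all of norm \<open>r\<close>, gives \<open>norm (t - x) powr \<alpha> > r powr \<alpha> + \<alpha> r powr (\<alpha> - 2) g x\<close>;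
  summing over \<open>X\<close> and evaluating the maximum at a maximiser of \<open>g\<close> yields
  \<open>P \<alpha> t X > P \<alpha> s X\<close> for every \<open>t \<noteq> s\<close>.
\<close>

lemma powr_gt_tangent:
  fixes a b \<alpha> :: real
  assumes "0 \<le> a" "0 < b" "\<alpha> > 1" "a \<noteq> b"
  shows "a powr \<alpha> > b powr \<alpha> + \<alpha> * b powr (\<alpha> - 1) * (a - b)"
proof (cases "a = 0")
  case True
  have "b powr \<alpha> = b powr (\<alpha> - 1) * b" using assms by (simp add: powr_diff)
  hence "b powr \<alpha> + \<alpha> * b powr (\<alpha> - 1) * (a - b) = b powr (\<alpha> - 1) * b * (1 - \<alpha>)"
    using True by (simp add: algebra_simps)
  also have "\<dots> < 0" using assms by (intro mult_pos_neg) auto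
  finally show ?thesis using True by simp
next
  case False
  hence a0: "a > 0" using assms by auto
  have der: "\<And>x. x > 0 \<Longrightarrow> DERIV (\<lambda>z. z powr \<alpha>) x :> \<alpha> * x powr (\<alpha> - 1)"
    by (rule has_real_derivative_powr)
  show ?thesis
  proof (cases "a < b")
    case True
    obtain z where z: "a < z" "z < b" "b powr \<alpha> - a powr \<alpha> = (b - a) * (\<alpha> * z powr (\<alpha> - 1))"
      using MVT2[OF True, of "\<lambda>z. z powr \<alpha>" "\<lambda>x. \<alpha> * x powr (\<alpha> - 1)"] der a0 by force
    have "z powr (\<alpha> - 1) < b powr (\<alpha> - 1)" using z a0 assms by (intro powr_less_mono2) auto
    hence "(b - a) * (\<alpha> * z powr (\<alpha> - 1)) < (b - a) * (\<alpha> * b powr (\<alpha> - 1))"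
      using True assms by (intro mult_strict_left_mono) auto
    thus ?thesis using z(3) by (simp add: algebra_simps)
  next
    case False
    hence ba: "b < a" using assms by auto
    obtain z where z: "b < z" "z < a" "a powr \<alpha> - b powr \<alpha> = (a - b) * (\<alpha> * z powr (\<alpha> - 1))"
      using MVT2[OF ba, of "\<lambda>z. z powr \<alpha>" "\<lambda>x. \<alpha> * x powr (\<alpha> - 1)"] der assms by force
    have "b powr (\<alpha> - 1) < z powr (\<alpha> - 1)" using z assms by (intro powr_less_mono2) auto
    hence "(a - b) * (\<alpha> * b powr (\<alpha> - 1)) < (a - b) * (\<alpha> * z powr (\<alpha> - 1))"
      using ba assms by (intro mult_strict_left_mono) auto
    thus ?thesis using z(3) by (simp add: algebra_simps)
  qed
qed

text \<open>For \<open>z = 0\<close> the tangent term vanishes because \<open>0 powr _ = 0\<close>.\<close>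

lemma norm_powr_gt_tangent:
  fixes y z :: "'a::real_inner" and \<alpha> :: real
  assumes "\<alpha> > 1" "y \<noteq> z"
  shows "norm y powr \<alpha> > norm z powr \<alpha> + \<alpha> * norm z powr (\<alpha> - 2) * (z \<bullet> (y - z))"
proof (cases "z = 0")
  case True
  thus ?thesis using assms by simp
next
  case False
  define a b where "a = norm y" and "b = norm z"
  have b0: "b > 0" using False b_def by simp
  have pow_b: "b powr (\<alpha> - 2) * b\<^sup>2 = b powr \<alpha>" "b powr (\<alpha> - 2) * b = b powr (\<alpha> - 1)"
    using b0 by (simp_all add: powr_diff power2_eq_square)
  have zz: "z \<bullet> z = b\<^sup>2" using b_def by (simp add: power2_norm_eq_inner)
  have c: "b powr (\<alpha> - 2) > 0" using b0 by simp
  have rhs: "norm z powr \<alpha> + \<alpha> * norm z powr (\<alpha> - 2) * (z \<bullet> (y - z))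
      = \<alpha> * (b powr (\<alpha> - 2) * (z \<bullet> y)) - \<alpha> * b powr \<alpha> + b powr \<alpha>"
    using pow_b zz b_def by (simp add: inner_diff_right algebra_simps)
  show ?thesis
  proof (cases "a = b")
    case True
    have "norm (y - z)^2 > 0" using assms by simp
    moreover have "y \<bullet> y = b\<^sup>2" using True a_def by (metis power2_norm_eq_inner)
    ultimately have "z \<bullet> y < b\<^sup>2" using zz
      by (simp add: power2_norm_eq_inner inner_diff_left inner_diff_right inner_commute)
    hence "\<alpha> * (b powr (\<alpha> - 2) * (z \<bullet> y)) < \<alpha> * b powr \<alpha>"
      using c pow_b assms by (metis mult_strict_left_mono zero_less_one less_trans)
    thus ?thesis using rhs True a_def b_def by simp
  next
    case False
    have "z \<bullet> y \<le> b * a" using Cauchy_Schwarz_ineq2[of z y] a_def b_def by simp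
    hence "b powr (\<alpha> - 2) * (z \<bullet> y) \<le> b powr (\<alpha> - 1) * a"
      using c pow_b by (metis mult.assoc mult_left_mono less_imp_le)
    hence "\<alpha> * (b powr (\<alpha> - 2) * (z \<bullet> y)) \<le> \<alpha> * (b powr (\<alpha> - 1) * a)" using assms by simp
    moreover have "a powr \<alpha> > b powr \<alpha> + \<alpha> * b powr (\<alpha> - 1) * (a - b)"
      using powr_gt_tangent a_def b0 assms(1) False by simp
    moreover have "\<alpha> * b powr (\<alpha> - 1) * (a - b) = \<alpha> * (b powr (\<alpha> - 1) * a) - \<alpha> * b powr \<alpha>"
      using b0 by (simp add: powr_diff field_simps)
    ultimately show ?thesis unfolding rhs by (simp only: a_def[symmetric])
  qed
qed

lemma nonneg_if_linear_dominates_quadratic: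
  fixes a b :: real
  assumes "\<And>\<epsilon>. \<epsilon> > 0 \<Longrightarrow> 0 \<le> \<epsilon> * a + \<epsilon>\<^sup>2 * b"
  shows "0 \<le> a"
proof (rule ccontr)
  assume "\<not> 0 \<le> a"
  define \<epsilon> where "\<epsilon> = - a / (\<bar>b\<bar> + 1)"
  have \<epsilon>: "\<epsilon> > 0" using \<open>\<not> 0 \<le> a\<close> by (simp add: \<epsilon>_def divide_neg_pos add_nonneg_pos)
  have "0 \<le> \<epsilon> * (a + \<epsilon> * b)"
    using assms[OF \<epsilon>] by (simp add: power2_eq_square algebra_simps)
  hence "0 \<le> a + \<epsilon> * b" using \<epsilon> by (simp add: zero_le_mult_iff)
  also have "\<dots> \<le> a + \<epsilon> * \<bar>b\<bar>" using \<epsilon> by (simp add: mult_left_mono)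
  also have "\<dots> = a / (\<bar>b\<bar> + 1)" by (simp add: \<epsilon>_def field_simps)
  also have "\<dots> < 0" using \<open>\<not> 0 \<le> a\<close> by (simp add: divide_neg_pos add_nonneg_pos)
  finally show False by simp
qed

lemma continuous_on_Max:
  fixes f :: "'a \<Rightarrow> 'b::topological_space \<Rightarrow> real"
  assumes "finite X" "X \<noteq> {}" "\<forall>x\<in>X. continuous_on K (f x)"
  shows "continuous_on K (\<lambda>t. Max ((\<lambda>x. f x t) ` X))"
  using assms
proof (induction X rule: finite_ne_induct)
  case (singleton x)
  then show ?case by simp
next
  case (insert x F)
  have "(\<lambda>t. Max ((\<lambda>x. f x t) ` insert x F)) = (\<lambda>t. max (f x t) (Max ((\<lambda>x. f x t) ` F)))"
    using insert by simp
  then show ?case using insert by (simp add: continuous_on_max)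
qed

lemma P_two: "P 2 t X = (\<Sum>x\<in>X. norm (t - x)^2) + Max ((\<lambda>x. norm (t - x)^2) ` X)"
  by (simp add: P_def)

lemma P_nonneg: "finite X \<Longrightarrow> X \<noteq> {} \<Longrightarrow> 0 \<le> P \<beta> t X"
  unfolding P_def by (intro add_nonneg_nonneg sum_nonneg) (auto simp: Max_ge_iff)

lemma P_equidistant:
  assumes "finite X" "X \<noteq> {}" "\<forall>x\<in>X. norm (s - x) = r"
  shows "P \<beta> s X = (card X + 1) * r powr \<beta>"
proof -
  have "(\<lambda>x. norm (s - x) powr \<beta>) ` X = {r powr \<beta>}" using assms by auto
  thus ?thesis using assms by (simp add: P_def algebra_simps)
qed

lemma P_two_has_minimiser:
  assumes "finite X" "X \<noteq> {}"
  shows "\<exists>m. \<forall>t. P 2 m X \<le> P 2 t X"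
proof -
  obtain x0 where x0: "x0 \<in> X" using assms by auto
  define R where "R = P 2 x0 X + 1"
  have R1: "R \<ge> 1" using P_nonneg[OF assms] R_def by simp
  have cont: "continuous_on (cball x0 R) (\<lambda>t. P 2 t X)"
    unfolding P_two using assms
    by (intro continuous_intros continuous_on_Max ballI continuous_on_power continuous_on_norm
        continuous_on_diff continuous_on_id continuous_on_const)
  obtain m where m: "m \<in> cball x0 R" "\<forall>y\<in>cball x0 R. P 2 m X \<le> P 2 y X"
    using continuous_attains_inf[OF compact_cball _ cont] R1 by auto
  have "P 2 m X \<le> P 2 t X" for t
  proof (cases "t \<in> cball x0 R")
    case True then show ?thesis using m by auto
  next
    case False
    hence d: "norm (t - x0) > R" by (simp add: dist_norm norm_minus_commute)
    have "P 2 m X \<le> P 2 x0 X" using m R1 by auto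
    also have "\<dots> < R" using R_def by simp
    also have "R \<le> R^2" using R1 by (simp add: power2_eq_square)
    also have "R^2 < norm (t - x0)^2" using d R1 by (intro power_strict_mono) auto
    also have "norm (t - x0)^2 \<le> (\<Sum>x\<in>X. norm (t - x)^2)"
      using x0 assms by (intro member_le_sum) auto
    also have "\<dots> \<le> P 2 t X" unfolding P_two using assms by (auto simp: Max_ge_iff)
    finally show ?thesis by simp
  qed
  thus ?thesis by blast
qed

lemma norm_midpoint_diff_power2:
  fixes a b x :: "'a::real_inner"
  shows "norm (midpoint a b - x)^2 = (norm (a - x)^2 + norm (b - x)^2) / 2 - norm (a - b)^2 / 4"
  unfolding midpoint_def power2_norm_eq_inner
  by (simp add: inner_add_left inner_add_right inner_diff_left inner_diff_right inner_commute
      field_simps)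

lemma P_two_midpoint_less:
  assumes "finite X" "X \<noteq> {}" "t1 \<noteq> t2"
  shows "P 2 (midpoint t1 t2) X < (P 2 t1 X + P 2 t2 X) / 2"
proof -
  let ?d = "\<lambda>t x. norm (t - x)^2"
  have "norm (t1 - t2)^2 > 0" using assms by simp
  hence mid: "?d (midpoint t1 t2) x < (?d t1 x + ?d t2 x) / 2" for x
    unfolding norm_midpoint_diff_power2 by linarith
  have "(\<Sum>x\<in>X. ?d (midpoint t1 t2) x) < (\<Sum>x\<in>X. (?d t1 x + ?d t2 x) / 2)"
    using assms mid by (intro sum_strict_mono) auto
  also have "\<dots> = (sum (?d t1) X + sum (?d t2) X) / 2"
    by (simp add: sum_divide_distrib[symmetric] sum.distrib)
  finally have sum_less: "sum (?d (midpoint t1 t2)) X < (sum (?d t1) X + sum (?d t2) X) / 2" .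
  have "Max (?d (midpoint t1 t2) ` X) \<le> (Max (?d t1 ` X) + Max (?d t2 ` X)) / 2"
  proof (rule Max.boundedI)
    fix y assume "y \<in> ?d (midpoint t1 t2) ` X"
    then obtain x where x: "x \<in> X" "y = ?d (midpoint t1 t2) x" by auto
    have "?d t1 x + ?d t2 x \<le> Max (?d t1 ` X) + Max (?d t2 ` X)"
      using x assms by (intro add_mono Max_ge) auto
    thus "y \<le> (Max (?d t1 ` X) + Max (?d t2 ` X)) / 2" using x(2) mid[of x] by argo
  qed (use assms in auto)
  thus ?thesis using sum_less unfolding P_two by simp
qed

lemma P_two_has_unique_minimiser:
  assumes "finite X" "X \<noteq> {}"
  shows "\<exists>!s. \<forall>t. P 2 s X \<le> P 2 t X"
proof (rule ex_ex1I)
  show "\<exists>s. \<forall>t. P 2 s X \<le> P 2 t X" using P_two_has_minimiser[OF assms] .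
next
  fix t1 t2 assume min1: "\<forall>t. P 2 t1 X \<le> P 2 t X" and min2: "\<forall>t. P 2 t2 X \<le> P 2 t X"
  show "t1 = t2"
  proof (rule ccontr)
    assume "t1 \<noteq> t2"
    thus False
      using P_two_midpoint_less[OF assms] min1[rule_format, of "midpoint t1 t2"]
        min1[rule_format, of t2] min2[rule_format, of t1]
      by fastforce
  qed
qed

lemma P_two_s_star_le:
  assumes "finite X" "X \<noteq> {}"
  shows "P 2 (s_star 2 X) X \<le> P 2 t X"
  using theI'[OF P_two_has_unique_minimiser[OF assms]] unfolding s_star_def by blast

lemma s_star_eqI:
  assumes "\<And>t. t \<noteq> s \<Longrightarrow> P \<beta> s X < P \<beta> t X"
  shows "s_star \<beta> X = s"
  unfolding s_star_def
proof (rule the_equality)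
  show "\<forall>t. P \<beta> s X \<le> P \<beta> t X"
  proof
    fix t show "P \<beta> s X \<le> P \<beta> t X" using assms[of t] by (cases "t = s") auto
  qed
  fix s' assume "\<forall>t. P \<beta> s' X \<le> P \<beta> t X"
  thus "s' = s" using assms[of s'] by (metis not_less)
qed

lemma P_two_equidistant_shift_le:
  assumes "finite X" "X \<noteq> {}" "\<forall>x\<in>X. norm (s - x) = r" "\<epsilon> \<ge> 0"
  shows "P 2 (s + \<epsilon> *\<^sub>R v) X \<le> P 2 s X
    + 2 * \<epsilon> * ((\<Sum>x\<in>X. (s - x) \<bullet> v) + Max ((\<lambda>x. (s - x) \<bullet> v) ` X))
    + \<epsilon>\<^sup>2 * ((card X + 1) * norm v^2)"
proof -
  define g where "g x = (s - x) \<bullet> v" for x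
  define q where "q = \<epsilon>\<^sup>2 * norm v^2"
  have r: "r \<ge> 0" using assms by auto
  have shift: "norm (s + \<epsilon> *\<^sub>R v - x)^2 = r^2 + 2 * \<epsilon> * g x + q" if "x \<in> X" for x
  proof -
    have "norm (s + \<epsilon> *\<^sub>R v - x)^2 = norm (s - x)^2 + 2 * \<epsilon> * g x + q"
      unfolding g_def q_def power2_norm_eq_inner
      by (simp add: inner_add_left inner_add_right inner_diff_left inner_diff_right inner_commute
          power2_eq_square algebra_simps)
    thus ?thesis using assms that by simp
  qed
  have "(\<Sum>x\<in>X. norm (s + \<epsilon> *\<^sub>R v - x)^2) = card X * r^2 + 2 * \<epsilon> * sum g X + card X * q"
    using shift by (simp add: sum.distrib sum_distrib_left)
  moreover have "Max ((\<lambda>x. norm (s + \<epsilon> *\<^sub>R v - x)^2) ` X) \<le> r^2 + 2 * \<epsilon> * Max (g ` X) + q"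
  proof (rule Max.boundedI)
    fix y assume "y \<in> (\<lambda>x. norm (s + \<epsilon> *\<^sub>R v - x)^2) ` X"
    then obtain x where x: "x \<in> X" "y = norm (s + \<epsilon> *\<^sub>R v - x)^2" by auto
    have "\<epsilon> * g x \<le> \<epsilon> * Max (g ` X)" using x assms by (intro mult_left_mono Max_ge) auto
    thus "y \<le> r^2 + 2 * \<epsilon> * Max (g ` X) + q" using x shift[of x] by linarith
  qed (use assms in auto)
  moreover have "P 2 s X = (card X + 1) * r^2"
    using P_equidistant[OF assms(1-3)] r by (simp add: powr_numeral)
  ultimately show ?thesis unfolding P_two g_def q_def by (simp add: algebra_simps)
qed

lemma equidistant_minimiser_first_order:
  assumes "finite X" "X \<noteq> {}" "\<forall>t. P 2 s X \<le> P 2 t X" "\<forall>x\<in>X. norm (s - x) = r"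
  shows "0 \<le> (\<Sum>x\<in>X. (s - x) \<bullet> v) + Max ((\<lambda>x. (s - x) \<bullet> v) ` X)"
proof -
  have "0 \<le> \<epsilon> * (2 * ((\<Sum>x\<in>X. (s - x) \<bullet> v) + Max ((\<lambda>x. (s - x) \<bullet> v) ` X)))
      + \<epsilon>\<^sup>2 * ((card X + 1) * norm v^2)" if "\<epsilon> > 0" for \<epsilon>
    using P_two_equidistant_shift_le[OF assms(1,2,4), of \<epsilon> v] assms(3)[rule_format, of "s + \<epsilon> *\<^sub>R v"]
      that by (simp add: algebra_simps)
  from nonneg_if_linear_dominates_quadratic[OF this] show ?thesis by simp
qed

lemma equidistant_minimiser_strict_min_P:
  assumes "finite X" "X \<noteq> {}" "\<alpha> > 1"
    and "\<forall>t. P 2 s X \<le> P 2 t X" and "\<forall>x\<in>X. norm (s - x) = r" and "t \<noteq> s"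
  shows "P \<alpha> s X < P \<alpha> t X"
proof -
  define c where "c = \<alpha> * r powr (\<alpha> - 2)"
  define g where "g x = (s - x) \<bullet> (t - s)" for x
  have first_order: "0 \<le> sum g X + Max (g ` X)"
    using equidistant_minimiser_first_order[OF assms(1,2,4,5)] unfolding g_def by simp
  have tangent: "r powr \<alpha> + c * g x < norm (t - x) powr \<alpha>" if "x \<in> X" for x
    using norm_powr_gt_tangent[OF assms(3), of "t - x" "s - x"] assms(5,6) that
    unfolding c_def g_def by (simp add: algebra_simps)
  have "Max (g ` X) \<in> g ` X" using assms(1,2) by (intro Max_in) auto
  then obtain x1 where x1: "x1 \<in> X" "g x1 = Max (g ` X)" by auto
  have "card X * r powr \<alpha> + c * sum g X = (\<Sum>x\<in>X. r powr \<alpha> + c * g x)"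
    by (simp add: sum.distrib sum_distrib_left)
  also have "\<dots> < (\<Sum>x\<in>X. norm (t - x) powr \<alpha>)"
    using assms(1,2) tangent by (intro sum_strict_mono) auto
  finally have sum_less: "card X * r powr \<alpha> + c * sum g X < (\<Sum>x\<in>X. norm (t - x) powr \<alpha>)" .
  have "r powr \<alpha> + c * Max (g ` X) < norm (t - x1) powr \<alpha>" using tangent[OF x1(1)] x1(2) by simp
  also have "\<dots> \<le> Max ((\<lambda>x. norm (t - x) powr \<alpha>) ` X)" using x1 assms(1) by (intro Max_ge) auto
  finally have max_less: "r powr \<alpha> + c * Max (g ` X) < Max ((\<lambda>x. norm (t - x) powr \<alpha>) ` X)" .
  have "0 \<le> c * (sum g X + Max (g ` X))" using first_order assms(3) by (simp add: c_def)
  thus ?thesis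
    using sum_less max_less P_equidistant[OF assms(1,2,5)] unfolding P_def[of \<alpha> t]
    by (simp add: algebra_simps)
qed

theorem proposition6:
  fixes \<alpha> :: real and X :: "(real^2) set"
  assumes "\<alpha> > 1" and "finite X" and "X \<noteq> {}"
    and "\<exists>r. \<forall>x\<in>X. dist (s_star 2 X) x = r"
  shows "s_star \<alpha> X = s_star 2 X"
proof (rule s_star_eqI)
  obtain r where "\<forall>x\<in>X. norm (s_star 2 X - x) = r" using assms(4) by (auto simp: dist_norm)
  moreover have "\<forall>t. P 2 (s_star 2 X) X \<le> P 2 t X" using P_two_s_star_le[OF assms(2,3)] by blast
  ultimately show "P \<alpha> (s_star 2 X) X < P \<alpha> t X" if "t \<noteq> s_star 2 X" for t
    using equidistant_minimiser_strict_min_P[OF assms(2,3,1)] that by blast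
qed

end
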